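(* Let $\theta_0:\mathbb{R}^d\to\mathbb{R}^{d_\theta}$ be measurable and for each $N\ge1$ let $\hat\theta_N$ be a (possibly random) $\mathbb{R}^{d_\theta}$-valued estimator built from data independent of $X^s,X^t$. Suppose (i) $\|\hat\theta_N(X^s)\|_\infty\le\xi_N$ a.s. for every $N\ge1$; (ii) $\mathbb{E}\|\theta_0(X^s)\|_\infty^8<\infty$; (iii) there are constants $c>0$, $m\ge0$ with $r_0(x)\le c\exp(m\|x\|_\infty)$ for all $x$; (iv) $\mathbb{E}[r_0(X^s)^2]<\infty$; (v) $\mathbb{E}\exp(\varsigma\|X^s\|_\infty^2)<\infty$ for some constant $\varsigma>0$. Then for $N\ge2$, $$\mathbb{E}\|\hat\theta_N(X^t)-\theta_0(X^t)\|_2^2=\mathbb{E}\big[\|\hat\theta_N(X^s)-\theta_0(X^s)\|_2^2r_0(X^s)\big]\le c_1\exp\{c_2(\log N)^{1/2}\}\,\mathbb{E}\|\hat\theta_N(X^s)-\theta_0(X^s)\|_2^2+\frac{c_3d_\theta(\xi_N^2+1)}{N},$$ with constants $c_1,c_2,c_3$ not depending on $N$.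
   Context: $X^s,X^t$ are random vectors in $\mathbb{R}^d$ with Lebesgue densities $p,q$, $\{q>0\}\subset\{p>0\}$, and density ratio $r_0=q/p$ (with $0/0=0$). Expectations are over both the test point and the randomness of $\hat\theta_N$. *)

theory Defs
  imports "HOL-Probability.Probability"
begin

definition linf_norm :: "real ^ 'n \<Rightarrow> real" where
  "linf_norm x = Max (range (\<lambda>i. \<bar>x $ i\<bar>))"

definition density_ratio :: "('a \<Rightarrow> real) \<Rightarrow> ('a \<Rightarrow> real) \<Rightarrow> 'a \<Rightarrow> real" where
  "density_ratio p q x = (if p x = 0 then 0 else q x / p x)"

end

theory Submission
  imports Defs
begin

(* Since q = p r0 on the support of q, the identity is a change of measure in the second factor.
   For the bound, split at the radius R = sqrt (4 ln N / sigma). Where the sup-norm |x| is at most R,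
   the growth condition caps r0 by c exp (m R), which is the factor c1 exp (c2 sqrt (ln N)).
   Beyond R we have exp (sigma |x|^2) >= N^4, and AM-GM against N bounds the weighted error by
   d_theta (xi^2 + 1) / N times r0^2 + exp (sigma |x|^2) + |theta0 x|^8, whose expectation under S
   is finite by (ii), (iv) and (v). *)

lemma abs_component_le_linf_norm: "\<bar>x $ i\<bar> \<le> linf_norm x"
  unfolding linf_norm_def by (rule Max_ge) auto

lemma linf_norm_nonneg: "0 \<le> linf_norm x"
  using abs_component_le_linf_norm[of x] abs_ge_zero order_trans by blast

lemma norm_square_le_card_linf_norm:
  fixes x :: "real ^ 'n"
  shows "(norm x)\<^sup>2 \<le> real CARD('n) * (linf_norm x)\<^sup>2"
proof -
  have "(norm x)\<^sup>2 = (\<Sum>i\<in>UNIV. (x $ i)\<^sup>2)"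
    unfolding norm_vec_def L2_set_def by (simp add: sum_nonneg)
  also have "\<dots> \<le> (\<Sum>i\<in>(UNIV::'n set). (linf_norm x)\<^sup>2)"
    by (intro sum_mono)
       (metis abs_component_le_linf_norm abs_le_square_iff abs_of_nonneg linf_norm_nonneg power2_abs)
  finally show ?thesis by simp
qed

lemma borel_measurable_linf_norm[measurable]: "linf_norm \<in> borel_measurable borel"
  unfolding linf_norm_def by (rule borel_measurable_Max) auto

lemma density_ratio_nonneg: "0 \<le> p x \<Longrightarrow> 0 \<le> q x \<Longrightarrow> 0 \<le> density_ratio p q x"
  unfolding density_ratio_def by auto

lemma borel_measurable_density_ratio[measurable]:
  assumes [measurable]: "p \<in> borel_measurable M" "q \<in> borel_measurable M"
  shows "density_ratio p q \<in> borel_measurable M"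
  unfolding density_ratio_def by measurable

lemma density_ratio_cancel:
  assumes "0 \<le> q x" "0 < q x \<Longrightarrow> 0 < p x"
  shows "p x * density_ratio p q x = q x"
  using assms unfolding density_ratio_def by force

lemma norm_diff_square_le:
  fixes u v :: "'a :: real_normed_vector"
  shows "(norm (u - v))\<^sup>2 \<le> 2 * (norm u)\<^sup>2 + 2 * (norm v)\<^sup>2"
proof -
  have "(norm (u - v))\<^sup>2 \<le> (norm u + norm v)\<^sup>2"
    by (simp add: norm_triangle_ineq4 power_mono)
  also have "\<dots> \<le> 2 * (norm u)\<^sup>2 + 2 * (norm v)\<^sup>2"
    using sum_squares_bound[of "norm u" "norm v"] by (simp add: power2_sum)
  finally show ?thesis .
qed

lemma weighted_square_error_le_moments:
  fixes u v :: "real ^ 'k" and n e r \<xi> :: real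
  assumes n: "1 \<le> n" and e: "n ^ 4 \<le> e" and r: "0 \<le> r" and u: "linf_norm u \<le> \<xi>"
  shows "(norm (u - v))\<^sup>2 * r \<le> real CARD('k) * (\<xi>\<^sup>2 + 1) / n * (r\<^sup>2 + e + linf_norm v ^ 8)"
proof -
  define k L B where "k = real CARD('k)" and "L = linf_norm v" and "B = r\<^sup>2 + e + L ^ 8"
  have L8: "0 \<le> L ^ 8"
    by (simp add: zero_le_even_power)
  have n4: "0 \<le> n ^ 4"
    using n by simp
  have "n\<^sup>2 \<le> n ^ 4"
    using n by (intro power_increasing) auto
  then have rn: "2 * r * n \<le> B"
    using sum_squares_bound[of r n] e L8 unfolding B_def by linarith
  have "2 * (L\<^sup>2 * n) * r \<le> L ^ 4 * n\<^sup>2 + r\<^sup>2"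
    using sum_squares_bound[of "L\<^sup>2 * n" r] by (simp add: power_mult_distrib flip: power_mult)
  also have "\<dots> \<le> B"
  proof -
    have "2 * L ^ 4 * n\<^sup>2 \<le> L ^ 8 + n ^ 4"
      using sum_squares_bound[of "L ^ 4" "n\<^sup>2"] by (simp flip: power_mult)
    then show ?thesis
      using e L8 n4 unfolding B_def by linarith
  qed
  finally have Lrn: "2 * L\<^sup>2 * r * n \<le> B"
    by (simp add: mult_ac)
  have "(linf_norm u)\<^sup>2 \<le> \<xi>\<^sup>2"
    using u linf_norm_nonneg[of u] by (simp add: power_mono)
  then have "(norm (u - v))\<^sup>2 \<le> 2 * (k * \<xi>\<^sup>2) + 2 * (k * L\<^sup>2)"
    using norm_diff_square_le[of u v] norm_square_le_card_linf_norm[of u] norm_square_le_card_linf_norm[of v]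
    unfolding k_def L_def by (smt (verit) mult_left_mono of_nat_0_le_iff)
  then have "(norm (u - v))\<^sup>2 * (r * n) \<le> (2 * (k * \<xi>\<^sup>2) + 2 * (k * L\<^sup>2)) * (r * n)"
    using r n by (intro mult_right_mono) auto
  then have "(norm (u - v))\<^sup>2 * r * n \<le> k * \<xi>\<^sup>2 * (2 * r * n) + k * (2 * L\<^sup>2 * r * n)"
    by (simp add: algebra_simps)
  also have "\<dots> \<le> k * \<xi>\<^sup>2 * B + k * B"
    using rn Lrn unfolding k_def by (intro add_mono mult_left_mono) auto
  finally show ?thesis
    using n unfolding k_def B_def L_def by (simp add: field_simps)
qed

lemma weighted_square_error_le:
  fixes u v :: "real ^ 'k" and x :: "real ^ 'd" and n \<sigma> m c r \<xi> :: real
  assumes n: "1 \<le> n" and \<sigma>: "0 < \<sigma>" and m: "0 \<le> m"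
    and r: "0 \<le> r" "r \<le> c * exp (m * linf_norm x)" and u: "linf_norm u \<le> \<xi>"
  shows "(norm (u - v))\<^sup>2 * r
    \<le> c * exp (m * sqrt (4 / \<sigma>) * sqrt (ln n)) * (norm (u - v))\<^sup>2
      + real CARD('k) * (\<xi>\<^sup>2 + 1) / n * (r\<^sup>2 + exp (\<sigma> * (linf_norm x)\<^sup>2) + linf_norm v ^ 8)"
    (is "?lhs \<le> ?C * ?F + ?tail")
proof -
  define R where "R = sqrt (4 * ln n / \<sigma>)"
  have lnn: "0 \<le> ln n"
    using n by simp
  have C: "?C = c * exp (m * R)"
    unfolding R_def by (simp add: real_sqrt_mult[symmetric])
  have c: "0 \<le> c"
  proof -
    have "0 \<le> c * exp (m * linf_norm x)"
      using r by linarith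
    then show ?thesis
      by (simp add: zero_le_mult_iff)
  qed
  have tail: "0 \<le> ?tail"
    using n by (simp add: zero_le_even_power)
  show ?thesis
  proof (cases "linf_norm x \<le> R")
    case True
    then have "r \<le> ?C"
      using r(2) c m unfolding C by (smt (verit) exp_mono mult_left_mono)
    then have "?lhs \<le> ?F * ?C"
      by (intro mult_left_mono) simp_all
    then show ?thesis
      using tail by (metis add_increasing2 mult.commute)
  next
    case False
    then have "\<sigma> * R\<^sup>2 \<le> \<sigma> * (linf_norm x)\<^sup>2"
      using \<sigma> lnn by (intro mult_left_mono power_mono) (auto simp: R_def)
    then have "exp (\<sigma> * R\<^sup>2) \<le> exp (\<sigma> * (linf_norm x)\<^sup>2)"
      by simp
    moreover have "exp (\<sigma> * R\<^sup>2) = n ^ 4"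
      using \<sigma> n lnn exp_of_nat_mult[of 4 "ln n"] by (simp add: R_def)
    ultimately have "n ^ 4 \<le> exp (\<sigma> * (linf_norm x)\<^sup>2)"
      by simp
    then have "?lhs \<le> ?tail"
      using weighted_square_error_le_moments n r(1) u by blast
    moreover have "0 \<le> ?C * ?F"
      using c by simp
    ultimately show ?thesis
      by linarith
  qed
qed

lemma nn_integral_le_lincomb:
  assumes "AE z in M. f z \<le> a * g z + b * h z" and "0 \<le> a" "0 \<le> b"
    and "\<And>z. 0 \<le> g z" "\<And>z. 0 \<le> h z"
    and [measurable]: "g \<in> borel_measurable M" "h \<in> borel_measurable M"
  shows "(\<integral>\<^sup>+ z. ennreal (f z) \<partial>M)
    \<le> ennreal a * (\<integral>\<^sup>+ z. ennreal (g z) \<partial>M) + ennreal b * (\<integral>\<^sup>+ z. ennreal (h z) \<partial>M)"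
proof -
  have "(\<integral>\<^sup>+ z. ennreal (f z) \<partial>M) \<le> (\<integral>\<^sup>+ z. ennreal a * ennreal (g z) + ennreal b * ennreal (h z) \<partial>M)"
  proof (rule nn_integral_mono_AE)
    show "AE z in M. ennreal (f z) \<le> ennreal a * ennreal (g z) + ennreal b * ennreal (h z)"
      using assms(1)
    proof eventually_elim
      case (elim z)
      then show ?case
        using assms(2,3) assms(4,5)[of z] by (simp add: ennreal_leI flip: ennreal_mult ennreal_plus)
    qed
  qed
  also have "\<dots> = ennreal a * (\<integral>\<^sup>+ z. ennreal (g z) \<partial>M) + ennreal b * (\<integral>\<^sup>+ z. ennreal (h z) \<partial>M)"
    by (simp add: nn_integral_add nn_integral_cmult)
  finally show ?thesis .
qed

lemma nn_integral_weighted_square_error_le: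
  fixes u v :: "'a \<Rightarrow> real ^ 'k" and x :: "'a \<Rightarrow> real ^ 'd" and r :: "'a \<Rightarrow> real"
  assumes n: "1 \<le> n" and \<sigma>: "0 < \<sigma>" and m: "0 \<le> m"
    and r: "\<And>z. 0 \<le> r z" "\<And>z. r z \<le> c * exp (m * linf_norm (x z))"
    and u: "AE z in M. linf_norm (u z) \<le> \<xi>"
    and [measurable]: "u \<in> borel_measurable M" "v \<in> borel_measurable M"
      "x \<in> borel_measurable M" "r \<in> borel_measurable M"
  shows "(\<integral>\<^sup>+ z. ennreal ((norm (u z - v z))\<^sup>2 * r z) \<partial>M)
    \<le> ennreal (c * exp (m * sqrt (4 / \<sigma>) * sqrt (ln n))) * (\<integral>\<^sup>+ z. ennreal ((norm (u z - v z))\<^sup>2) \<partial>M)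
      + ennreal (real CARD('k) * (\<xi>\<^sup>2 + 1) / n)
        * (\<integral>\<^sup>+ z. ennreal ((r z)\<^sup>2 + exp (\<sigma> * (linf_norm (x z))\<^sup>2) + linf_norm (v z) ^ 8) \<partial>M)"
proof (rule nn_integral_le_lincomb)
  show "AE z in M. (norm (u z - v z))\<^sup>2 * r z
    \<le> c * exp (m * sqrt (4 / \<sigma>) * sqrt (ln n)) * (norm (u z - v z))\<^sup>2
      + real CARD('k) * (\<xi>\<^sup>2 + 1) / n * ((r z)\<^sup>2 + exp (\<sigma> * (linf_norm (x z))\<^sup>2) + linf_norm (v z) ^ 8)"
    using u by eventually_elim (rule weighted_square_error_le[OF n \<sigma> m r])
  have "0 \<le> c * exp (m * linf_norm (x undefined))"
    using r order_trans by blast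
  then show "0 \<le> c * exp (m * sqrt (4 / \<sigma>) * sqrt (ln n))"
    by (simp add: zero_le_mult_iff)
qed (use n in \<open>auto simp: zero_le_even_power\<close>)

lemma nn_integral_pair_density_ratio:
  fixes p q :: "'b \<Rightarrow> real" and f :: "'a \<times> 'b \<Rightarrow> real"
  assumes "sigma_finite_measure (density M p)" "sigma_finite_measure (density M q)"
    and [measurable]: "p \<in> borel_measurable M" "q \<in> borel_measurable M" "f \<in> borel_measurable (P \<Otimes>\<^sub>M M)"
    and nonneg: "\<And>x. 0 \<le> p x" "\<And>x. 0 \<le> q x" "\<And>z. 0 \<le> f z"
    and supp: "\<And>x. 0 < q x \<Longrightarrow> 0 < p x"
  shows "(\<integral>\<^sup>+ z. ennreal (f z) \<partial>(P \<Otimes>\<^sub>M density M q))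
    = (\<integral>\<^sup>+ z. ennreal (f z * density_ratio p q (snd z)) \<partial>(P \<Otimes>\<^sub>M density M p))"
proof -
  have inner: "(\<integral>\<^sup>+ x. ennreal (f (w, x)) \<partial>density M q)
      = (\<integral>\<^sup>+ x. ennreal (f (w, x) * density_ratio p q x) \<partial>density M p)"
    if w: "w \<in> space P" for w
  proof -
    have [measurable]: "(\<lambda>x. f (w, x)) \<in> borel_measurable M"
      using measurable_Pair2[OF assms(5) w] by simp
    have "ennreal (q x) * ennreal (f (w, x)) = ennreal (p x) * ennreal (f (w, x) * density_ratio p q x)" for x
      using density_ratio_cancel[of q x p, OF nonneg(2) supp] nonneg density_ratio_nonneg[of p x q]
      by (simp flip: ennreal_mult add: mult_ac)
    then show ?thesis
      by (simp add: nn_integral_density)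
  qed
  show ?thesis
    by (simp add: sigma_finite_measure.nn_integral_fst[OF assms(1), symmetric]
        sigma_finite_measure.nn_integral_fst[OF assms(2), symmetric] inner cong: nn_integral_cong)
qed

lemma nn_integral_prob_space_pair_snd:
  assumes "prob_space P" "sigma_finite_measure M" "g \<in> borel_measurable M"
  shows "(\<integral>\<^sup>+ z. g (snd z) \<partial>(P \<Otimes>\<^sub>M M)) = (\<integral>\<^sup>+ x. g x \<partial>M)"
  using sigma_finite_measure.nn_integral_fst[OF assms(2), of "\<lambda>z. g (snd z)" P]
    prob_space.emeasure_space_1[OF assms(1)] assms(3)
  by simp

theorem proposition4p4:
  fixes P :: "'w measure"
    and p q :: "real ^ 'd \<Rightarrow> real"
    and \<theta>0 :: "real ^ 'd \<Rightarrow> real ^ 'k"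
    and \<theta>h :: "nat \<Rightarrow> 'w \<Rightarrow> real ^ 'd \<Rightarrow> real ^ 'k"
    and \<xi> :: "nat \<Rightarrow> real"
    and c m :: real
  defines "S \<equiv> density lborel (\<lambda>x. ennreal (p x))"
      and "T \<equiv> density lborel (\<lambda>x. ennreal (q x))"
      and "r0 \<equiv> density_ratio p q"
  assumes P_prob: "prob_space P"
    and p_meas: "p \<in> borel_measurable lborel" and q_meas: "q \<in> borel_measurable lborel"
    and p_nonneg: "\<And>x. p x \<ge> 0" and q_nonneg: "\<And>x. q x \<ge> 0"
    and S_prob: "prob_space S" and T_prob: "prob_space T"
    and supp: "{x. q x > 0} \<subseteq> {x. p x > 0}"
    and \<theta>0_meas: "\<theta>0 \<in> borel_measurable lborel"
    and \<theta>h_meas: "\<And>N. (\<lambda>z. \<theta>h N (fst z) (snd z)) \<in> borel_measurable (P \<Otimes>\<^sub>M lborel)"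
    and i: "\<And>N. N \<ge> 1 \<Longrightarrow>
              (AE z in P \<Otimes>\<^sub>M S. linf_norm (\<theta>h N (fst z) (snd z)) \<le> \<xi> N)"
    and ii: "(\<integral>\<^sup>+ x. ennreal (linf_norm (\<theta>0 x) ^ 8) \<partial>S) < \<infinity>"
    and iii: "c > 0" "m \<ge> 0" "\<And>x. r0 x \<le> c * exp (m * linf_norm x)"
    and iv: "(\<integral>\<^sup>+ x. ennreal ((r0 x)\<^sup>2) \<partial>S) < \<infinity>"
    and v: "\<exists>\<sigma>>0. (\<integral>\<^sup>+ x. ennreal (exp (\<sigma> * (linf_norm x)\<^sup>2)) \<partial>S) < \<infinity>"
  shows "\<exists>c1 c2 c3 :: real. \<forall>N\<ge>2.
     (\<integral>\<^sup>+ z. ennreal ((norm (\<theta>h N (fst z) (snd z) - \<theta>0 (snd z)))\<^sup>2) \<partial>(P \<Otimes>\<^sub>M T))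
       = (\<integral>\<^sup>+ z. ennreal ((norm (\<theta>h N (fst z) (snd z) - \<theta>0 (snd z)))\<^sup>2 * r0 (snd z)) \<partial>(P \<Otimes>\<^sub>M S))
   \<and> (\<integral>\<^sup>+ z. ennreal ((norm (\<theta>h N (fst z) (snd z) - \<theta>0 (snd z)))\<^sup>2 * r0 (snd z)) \<partial>(P \<Otimes>\<^sub>M S))
       \<le> ennreal (c1 * exp (c2 * sqrt (ln (real N))))
            * (\<integral>\<^sup>+ z. ennreal ((norm (\<theta>h N (fst z) (snd z) - \<theta>0 (snd z)))\<^sup>2) \<partial>(P \<Otimes>\<^sub>M S))
         + ennreal (c3 * real CARD('k) * ((\<xi> N)\<^sup>2 + 1) / real N)"
proof -
  obtain \<sigma> where \<sigma>: "0 < \<sigma>" and gauss: "(\<integral>\<^sup>+ x. ennreal (exp (\<sigma> * (linf_norm x)\<^sup>2)) \<partial>S) < \<infinity>"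
    using v by blast
  note [measurable] = p_meas q_meas \<theta>0_meas \<theta>h_meas
  have sets_S [measurable_cong]: "sets S = sets lborel"
    unfolding S_def by simp
  have r0_nonneg: "0 \<le> r0 x" for x
    unfolding r0_def using p_nonneg q_nonneg by (rule density_ratio_nonneg)
  define H where "H x = (r0 x)\<^sup>2 + exp (\<sigma> * (linf_norm x)\<^sup>2) + linf_norm (\<theta>0 x) ^ 8" for x
  have "(\<integral>\<^sup>+ x. ennreal (H x) \<partial>S) = (\<integral>\<^sup>+ x. ennreal ((r0 x)\<^sup>2) \<partial>S)
      + (\<integral>\<^sup>+ x. ennreal (exp (\<sigma> * (linf_norm x)\<^sup>2)) \<partial>S) + (\<integral>\<^sup>+ x. ennreal (linf_norm (\<theta>0 x) ^ 8) \<partial>S)"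
    unfolding H_def r0_def by (simp add: ennreal_plus nn_integral_add zero_le_even_power linf_norm_nonneg)
  also have "\<dots> < \<infinity>"
    using ii iv gauss by (simp add: ennreal_add_less_top)
  finally obtain c3 where c3: "0 \<le> c3" "(\<integral>\<^sup>+ x. ennreal (H x) \<partial>S) = ennreal c3"
    by (auto simp: less_top_ennreal)
  show ?thesis
  proof (rule exI[of _ c], rule exI[of _ "m * sqrt (4 / \<sigma>)"], rule exI[of _ c3], intro allI impI conjI)
    fix N :: nat
    assume N: "2 \<le> N"
    let ?err = "\<lambda>z. (norm (\<theta>h N (fst z) (snd z) - \<theta>0 (snd z)))\<^sup>2"
    show "(\<integral>\<^sup>+ z. ennreal (?err z) \<partial>(P \<Otimes>\<^sub>M T)) = (\<integral>\<^sup>+ z. ennreal (?err z * r0 (snd z)) \<partial>(P \<Otimes>\<^sub>M S))"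
      using S_prob T_prob supp p_nonneg q_nonneg unfolding S_def T_def r0_def
      by (intro nn_integral_pair_density_ratio) (auto intro: prob_space_imp_sigma_finite)
    have "(\<integral>\<^sup>+ z. ennreal (?err z * r0 (snd z)) \<partial>(P \<Otimes>\<^sub>M S))
      \<le> ennreal (c * exp (m * sqrt (4 / \<sigma>) * sqrt (ln (real N)))) * (\<integral>\<^sup>+ z. ennreal (?err z) \<partial>(P \<Otimes>\<^sub>M S))
        + ennreal (real CARD('k) * ((\<xi> N)\<^sup>2 + 1) / real N) * (\<integral>\<^sup>+ z. ennreal (H (snd z)) \<partial>(P \<Otimes>\<^sub>M S))"
      unfolding H_def using N \<sigma> iii r0_nonneg i[of N]
      by (intro nn_integral_weighted_square_error_le) (auto simp: r0_def)
    also have "(\<integral>\<^sup>+ z. ennreal (H (snd z)) \<partial>(P \<Otimes>\<^sub>M S)) = ennreal c3"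
      using P_prob S_prob c3(2) unfolding H_def r0_def
      by (subst nn_integral_prob_space_pair_snd) (auto intro: prob_space_imp_sigma_finite)
    finally show "(\<integral>\<^sup>+ z. ennreal (?err z * r0 (snd z)) \<partial>(P \<Otimes>\<^sub>M S))
      \<le> ennreal (c * exp (m * sqrt (4 / \<sigma>) * sqrt (ln (real N)))) * (\<integral>\<^sup>+ z. ennreal (?err z) \<partial>(P \<Otimes>\<^sub>M S))
        + ennreal (c3 * real CARD('k) * ((\<xi> N)\<^sup>2 + 1) / real N)"
      using c3(1) by (simp add: ennreal_mult[symmetric] mult_ac)
  qed
qed

end
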